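(* Let $R$ be a semiring, let $\mathcal{I}(R)$ be the set of ideals of $R$, $\mathcal{KI}(R)$ the set of $k$-ideals of $R$, and $\mathcal{KC}(R)$ the set of $k$-congruences on $R$, and let $\kappa:\mathcal{I}(R)\to\{\text{congruences on }R\}$ be $\kappa(A)=\kappa_A$. (1) The restriction of $\kappa$ to $\mathcal{KI}(R)$ is an inclusion-preserving bijection from $\mathcal{KI}(R)$ onto $\mathcal{KC}(R)$. (2) If $\mathcal{F}$ is a family with $\mathcal{KI}(R)\subseteq\mathcal{F}\subseteq\mathcal{I}(R)$ and $\kappa$ is injective on $\mathcal{F}$, then $\mathcal{F}=\mathcal{KI}(R)$.
   Context: A semiring $(R,+,\cdot)$ is a set with two binary operations such that $(R,+)$ is a commutative semigroup, $(R,\cdot)$ is a semigroup, and multiplication distributes over addition from both sides; no additive neutral element or identity is assumed. An ideal of $R$ is a nonempty subset $A\subseteq R$ with $a+b\in A$ and $ra,ar\in A$ for all $a,b\in A$, $r\in R$. For an ideal $A$, its $k$-closure is $\overline{A}=\{x\in R\mid x+a=b \text{ for some } a,b\in A\}$, and $A$ is a $k$-ideal if $A=\overline{A}$. A congruence on $R$ is an equivalence relation $\equiv$ such that $a\equiv b$ implies $a+c\equiv b+c$, $ac\equiv bc$, $ca\equiv cb$ for all $a,b,c\in R$. For an ideal $A$, $\kappa_A$ is the congruence defined by $x\,\kappa_A\,y$ iff $x+a=y+b$ for some $a,b\in A$. A congruence $\theta$ is a $k$-congruence if $\theta=\kappa_A$ for some ideal $A$ of $R$. Congruences are compared as subsets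 of $R\times R$. Throughout, $|R|\geq 2$. *)

theory Defs
  imports Main
begin

text \<open>Semirings in the paper's sense (no zero, no one) are exactly Isabelle's class semiring.\<close>

definition is_ideal :: "'a::semiring set \<Rightarrow> bool" where
  "is_ideal A \<longleftrightarrow> A \<noteq> {} \<and> (\<forall>a\<in>A. \<forall>b\<in>A. a + b \<in> A)
     \<and> (\<forall>a\<in>A. \<forall>r. r * a \<in> A \<and> a * r \<in> A)"

definition kclosure :: "'a::semiring set \<Rightarrow> 'a set" where
  "kclosure A = {x. \<exists>a\<in>A. \<exists>b\<in>A. x + a = b}"

definition is_k_ideal :: "'a::semiring set \<Rightarrow> bool" where
  "is_k_ideal A \<longleftrightarrow> is_ideal A \<and> A = kclosure A"

definition kappa :: "'a::semiring set \<Rightarrow> ('a \<times> 'a) set" where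
  "kappa A = {(x, y). \<exists>a\<in>A. \<exists>b\<in>A. x + a = y + b}"

definition is_congruence :: "('a::semiring \<times> 'a) set \<Rightarrow> bool" where
  "is_congruence \<theta> \<longleftrightarrow> equiv UNIV \<theta> \<and>
     (\<forall>a b c. (a, b) \<in> \<theta> \<longrightarrow> (a + c, b + c) \<in> \<theta> \<and> (a * c, b * c) \<in> \<theta> \<and> (c * a, c * b) \<in> \<theta>)"

definition is_k_congruence :: "('a::semiring \<times> 'a) set \<Rightarrow> bool" where
  "is_k_congruence \<theta> \<longleftrightarrow> (\<exists>A. is_ideal A \<and> \<theta> = kappa A)"

end

theory Submission
  imports Defs
begin

text \<open>
  The \<open>k\<close>-closure of an ideal \<open>A\<close> is a \<open>k\<close>-ideal containing \<open>A\<close>, and \<open>\<kappa>\<close> cannot tell the two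
  apart: an extra summand from \<open>A\<close> absorbs the witnesses of the closure. Conversely
  \<open>\<kappa>\<^sub>A \<subseteq> \<kappa>\<^sub>B\<close> forces \<open>A \<subseteq> B\<close> once \<open>B\<close> is a \<open>k\<close>-ideal, because \<open>(a + b, b) \<in> \<kappa>\<^sub>A\<close> for \<open>a \<in> A\<close>, \<open>b \<in> B\<close>.
  Hence \<open>\<kappa>\<close> is an order embedding of the \<open>k\<close>-ideals onto the \<open>k\<close>-congruences, and an injective
  family containing all \<open>k\<close>-ideals cannot contain an ideal different from its closure.
\<close>

lemma ideal_add_closed: "is_ideal A \<Longrightarrow> a \<in> A \<Longrightarrow> b \<in> A \<Longrightarrow> a + b \<in> A"
  unfolding is_ideal_def by blast

lemma ideal_mult_closed: "is_ideal A \<Longrightarrow> a \<in> A \<Longrightarrow> r * a \<in> A \<and> a * r \<in> A"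
  unfolding is_ideal_def by blast

lemma kclosureI: "a \<in> A \<Longrightarrow> b \<in> A \<Longrightarrow> x + a = b \<Longrightarrow> x \<in> kclosure A"
  unfolding kclosure_def by blast

lemma kclosureE:
  assumes "x \<in> kclosure A"
  obtains a b where "a \<in> A" "b \<in> A" "x + a = b"
  using assms unfolding kclosure_def by blast

lemma kappaI: "a \<in> A \<Longrightarrow> b \<in> A \<Longrightarrow> x + a = y + b \<Longrightarrow> (x, y) \<in> kappa A"
  unfolding kappa_def by blast

lemma kappaE:
  assumes "(x, y) \<in> kappa A"
  obtains a b where "a \<in> A" "b \<in> A" "x + a = y + b"
  using assms unfolding kappa_def by blast

lemma kappa_mono: "A \<subseteq> B \<Longrightarrow> kappa A \<subseteq> kappa B"
  unfolding kappa_def by blast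

lemma subset_kclosure:
  assumes "is_ideal A"
  shows "A \<subseteq> kclosure A"
proof
  fix x assume "x \<in> A"
  with assms show "x \<in> kclosure A"
    by (intro kclosureI[of x A "x + x"]) (auto intro: ideal_add_closed)
qed

lemma is_ideal_kclosure:
  assumes A: "is_ideal A"
  shows "is_ideal (kclosure A)"
proof -
  have "kclosure A \<noteq> {}"
    using subset_kclosure[OF A] A unfolding is_ideal_def by blast
  moreover have "x + y \<in> kclosure A" if "x \<in> kclosure A" "y \<in> kclosure A" for x y
  proof -
    obtain a b where ab: "a \<in> A" "b \<in> A" "x + a = b" using \<open>x \<in> kclosure A\<close> by (rule kclosureE)
    obtain c d where cd: "c \<in> A" "d \<in> A" "y + c = d" using \<open>y \<in> kclosure A\<close> by (rule kclosureE)
    have "(x + y) + (a + c) = b + d"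
      by (simp flip: ab(3) cd(3) add: ac_simps)
    with ab cd A show ?thesis
      by (intro kclosureI[of "a + c" A "b + d"]) (auto intro: ideal_add_closed)
  qed
  moreover have "r * x \<in> kclosure A \<and> x * r \<in> kclosure A" if x: "x \<in> kclosure A" for x r
  proof -
    obtain a b where ab: "a \<in> A" "b \<in> A" "x + a = b" using x by (rule kclosureE)
    have "r * x + r * a = r * b" "x * r + a * r = b * r"
      by (simp_all flip: ab(3) add: distrib_left distrib_right)
    with ab A show ?thesis
      by (auto intro: kclosureI dest: ideal_mult_closed[where r = r])
  qed
  ultimately show ?thesis unfolding is_ideal_def by blast
qed

lemma kclosure_kclosure:
  assumes A: "is_ideal A"
  shows "kclosure (kclosure A) = kclosure A"
proof
  show "kclosure A \<subseteq> kclosure (kclosure A)"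
    using subset_kclosure[OF is_ideal_kclosure[OF A]] .
  show "kclosure (kclosure A) \<subseteq> kclosure A"
  proof
    fix x assume "x \<in> kclosure (kclosure A)"
    then obtain c d where cd: "c \<in> kclosure A" "d \<in> kclosure A" "x + c = d" by (rule kclosureE)
    obtain a1 b1 where 1: "a1 \<in> A" "b1 \<in> A" "c + a1 = b1" using cd(1) by (rule kclosureE)
    obtain a2 b2 where 2: "a2 \<in> A" "b2 \<in> A" "d + a2 = b2" using cd(2) by (rule kclosureE)
    have "x + (b1 + a2) = b2 + a1"
      by (simp flip: 1(3) 2(3) cd(3) add: ac_simps)
    with 1 2 A show "x \<in> kclosure A"
      by (intro kclosureI[of "b1 + a2" A "b2 + a1"]) (auto intro: ideal_add_closed)
  qed
qed

lemma is_k_ideal_kclosure: "is_ideal A \<Longrightarrow> is_k_ideal (kclosure A)"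
  unfolding is_k_ideal_def by (simp add: is_ideal_kclosure kclosure_kclosure)

lemma kappa_kclosure:
  assumes A: "is_ideal A"
  shows "kappa (kclosure A) = kappa A"
proof
  show "kappa A \<subseteq> kappa (kclosure A)"
    using kappa_mono[OF subset_kclosure[OF A]] .
  show "kappa (kclosure A) \<subseteq> kappa A"
  proof clarify
    fix x y assume "(x, y) \<in> kappa (kclosure A)"
    then obtain c d where cd: "c \<in> kclosure A" "d \<in> kclosure A" "x + c = y + d" by (rule kappaE)
    obtain a1 b1 where 1: "a1 \<in> A" "b1 \<in> A" "c + a1 = b1" using cd(1) by (rule kclosureE)
    obtain a2 b2 where 2: "a2 \<in> A" "b2 \<in> A" "d + a2 = b2" using cd(2) by (rule kclosureE)
    have "x + (b1 + a2) = (x + c) + a1 + a2"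
      by (simp flip: 1(3) add: ac_simps)
    also have "\<dots> = (y + d) + a2 + a1"
      using cd(3) by (simp add: ac_simps)
    also have "\<dots> = y + (b2 + a1)"
      by (simp flip: 2(3) add: ac_simps)
    finally show "(x, y) \<in> kappa A"
      using 1 2 A by (intro kappaI[of "b1 + a2" A "b2 + a1"]) (auto intro: ideal_add_closed)
  qed
qed

lemma kappa_subset_imp_subset:
  assumes A: "is_ideal A" and B: "is_k_ideal B" and le: "kappa A \<subseteq> kappa B"
  shows "A \<subseteq> B"
proof
  fix a assume "a \<in> A"
  obtain b where "b \<in> B" using B unfolding is_k_ideal_def is_ideal_def by blast
  have "(a + b) + a = b + (a + a)" by (simp add: ac_simps)
  with \<open>a \<in> A\<close> A have "(a + b, b) \<in> kappa A"
    by (intro kappaI[of a A "a + a"]) (auto intro: ideal_add_closed)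
  with le obtain b1 b2 where b12: "b1 \<in> B" "b2 \<in> B" "(a + b) + b1 = b + b2"
    by (blast elim: kappaE)
  have "a + (b + b1) = b + b2" using b12(3) by (simp only: add.assoc)
  with b12 \<open>b \<in> B\<close> B have "a \<in> kclosure B"
    unfolding is_k_ideal_def by (intro kclosureI[of "b + b1" B "b + b2"]) (auto intro: ideal_add_closed)
  with B show "a \<in> B" unfolding is_k_ideal_def by simp
qed

lemma inj_on_kappa_k_ideals: "inj_on kappa {A. is_k_ideal A}"
proof (rule inj_onI)
  fix A B assume "A \<in> {A. is_k_ideal A}" "B \<in> {A. is_k_ideal A}" and eq: "kappa A = kappa B"
  then have "is_k_ideal A" "is_k_ideal B" "is_ideal A" "is_ideal B"
    by (simp_all add: is_k_ideal_def)
  with eq show "A = B"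
    by (intro subset_antisym kappa_subset_imp_subset) simp_all
qed

lemma kappa_image_k_ideals: "kappa ` {A. is_k_ideal A} = {\<theta>. is_k_congruence \<theta>}"
  (is "?image = ?k_congruences")
proof
  show "?image \<subseteq> ?k_congruences"
    unfolding is_k_congruence_def is_k_ideal_def by blast
  show "?k_congruences \<subseteq> ?image"
  proof
    fix \<theta> assume "\<theta> \<in> ?k_congruences"
    then obtain A where A: "is_ideal A" and "\<theta> = kappa A" unfolding is_k_congruence_def by blast
    then have "\<theta> = kappa (kclosure A)" by (simp add: kappa_kclosure)
    with is_k_ideal_kclosure[OF A] show "\<theta> \<in> ?image" by blast
  qed
qed

lemma bij_betw_kappa_k_ideals: "bij_betw kappa {A. is_k_ideal A} {\<theta>. is_k_congruence \<theta>}"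
  by (simp add: bij_betw_def inj_on_kappa_k_ideals kappa_image_k_ideals)

lemma k_ideals_eq_if_inj_on_kappa:
  assumes k_ideals: "{A. is_k_ideal A} \<subseteq> F" and ideals: "F \<subseteq> {A. is_ideal A}"
    and inj: "inj_on kappa F"
  shows "F = {A. is_k_ideal A}"
proof (rule equalityI)
  show "F \<subseteq> {A. is_k_ideal A}"
  proof
    fix A assume "A \<in> F"
    with ideals have A: "is_ideal A" by blast
    with k_ideals have "kclosure A \<in> F" by (blast intro: is_k_ideal_kclosure)
    then have "kclosure A = A"
      using \<open>A \<in> F\<close> by (rule inj_onD[OF inj kappa_kclosure[OF A]])
    with A show "A \<in> {A. is_k_ideal A}" unfolding is_k_ideal_def by simp
  qed
qed (fact k_ideals)

theorem theorem3p8: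
  assumes "\<exists>x y :: 'a::semiring. x \<noteq> y"
  shows "(bij_betw (kappa :: 'a set \<Rightarrow> _) {A. is_k_ideal A} {\<theta>. is_k_congruence \<theta>}
         \<and> (\<forall>A B :: 'a set. is_k_ideal A \<longrightarrow> is_k_ideal B \<longrightarrow> A \<subseteq> B \<longrightarrow> kappa A \<subseteq> kappa B))
         \<and> (\<forall>F :: 'a set set. {A. is_k_ideal A} \<subseteq> F \<and> F \<subseteq> {A. is_ideal A} \<and> inj_on kappa F
           \<longrightarrow> F = {A. is_k_ideal A})"
  by (simp add: bij_betw_kappa_k_ideals kappa_mono k_ideals_eq_if_inj_on_kappa)

end
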